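(* Let $q\ge1$, $(a,q)=1$, $X\ge2$ and $1\le h\le X$. Then $$J_{2,a,q}(X,h):=\int_0^\infty\Big|\sum_{x<n\le x+h}F(n)e^{-n/X}\Big|^2dx\ll\frac{h^2}{X^2}\sum_{j=1}^\infty\frac{1}{2^{j-1}}\Big(H_{a,q}(jX)+\frac{jX}{\varphi^2(q)}\Big)+\sum_{j=1}^\infty\frac{1}{2^{j-1}}\Big(K_{a,q}(jX,h)+\frac{jX}{\varphi^2(q)}\Big),$$ where $F(n)=\Lambda(n)\delta(n)-\frac{1}{\varphi(q)}+\frac{\widetilde\chi(a)}{\varphi(q)}n^{\widetilde\beta-1}$, $H_{a,q}(y)=\int_0^y\Big(\psi(t,q,a)-\frac{t}{\varphi(q)}+\frac{\widetilde\chi(a)}{\varphi(q)}\frac{t^{\widetilde\beta}}{\widetilde\beta}\Big)^2dt$ and $K_{a,q}(y,h)=\int_0^y\Big(\psi(t+h,q,a)-\psi(t,q,a)-\frac{h}{\varphi(q)}+\frac{\widetilde\chi(a)}{\varphi(q)}\frac{(t+h)^{\widetilde\beta}-t^{\widetilde\beta}}{\widetilde\beta}\Big)^2dt$.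
   Context: $\Lambda$ is the von Mangoldt function, $\varphi$ Euler's totient, $\delta(n)=1$ if $n\equiv a\pmod q$ and $0$ otherwise, $\psi(t,q,a)=\sum_{m\le t,\ m\equiv a (q)}\Lambda(m)$. $\widetilde\beta$ is the possible Siegel (exceptional) zero for modulus $q$, a real zero of $L(s,\widetilde\chi)$ for the exceptional real character $\widetilde\chi$ mod $q$ (at most one exists; if none, the terms involving $\widetilde\beta$ are absent). *)

theory Defs
  imports "HOL-Analysis.Analysis" "HOL-Number_Theory.Number_Theory"
begin

definition psi :: "real \<Rightarrow> nat \<Rightarrow> nat \<Rightarrow> real" where
  "psi t q a = (\<Sum>m \<in> {m. 1 \<le> m \<and> real m \<le> t \<and> [m = a] (mod q)}. mangoldt m)"

definition delta :: "nat \<Rightarrow> nat \<Rightarrow> nat \<Rightarrow> real" where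
  "delta q a n = (if [n = a] (mod q) then 1 else 0)"

definition real_dirichlet_char :: "nat \<Rightarrow> (nat \<Rightarrow> int) \<Rightarrow> bool" where
  "real_dirichlet_char q chi \<longleftrightarrow>
     q \<ge> 1 \<and> chi 1 = 1 \<and>
     (\<forall>m n. chi (m * n) = chi m * chi n) \<and>
     (\<forall>n. chi (n + q) = chi n) \<and>
     (\<forall>n. chi n \<noteq> 0 \<longleftrightarrow> coprime n q) \<and>
     (\<forall>n. chi n \<in> {-1, 0, 1})"

definition nonprincipal :: "nat \<Rightarrow> (nat \<Rightarrow> int) \<Rightarrow> bool" where
  "nonprincipal q chi \<longleftrightarrow> (\<exists>n. coprime n q \<and> chi n \<noteq> 1)"

(* L(s,chi) = sum_{n>=1} chi(n) n^{-s} vanishes (series converges for real s > 0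
   when chi is nonprincipal) *)
definition L_zero :: "(nat \<Rightarrow> int) \<Rightarrow> real \<Rightarrow> bool" where
  "L_zero chi s \<longleftrightarrow> (\<lambda>n. real_of_int (chi (Suc n)) / real (Suc n) powr s) sums 0"

(* Exceptional (Siegel) zero for modulus q, relative to the zero-free-region constant c0:
   a real zero beta > 1 - c0 / log q of L(s,chi) for a real nonprincipal character chi mod q *)
definition exceptional_zero :: "real \<Rightarrow> nat \<Rightarrow> (nat \<Rightarrow> int) \<Rightarrow> real \<Rightarrow> bool" where
  "exceptional_zero c0 q chi \<beta> \<longleftrightarrow>
     real_dirichlet_char q chi \<and> nonprincipal q chi \<and>
     1 - c0 / ln (real q) < \<beta> \<and> \<beta> < 1 \<and> L_zero chi \<beta>"

(* In the following, c stands for chi~(a) and be for beta~; the case without an exceptional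
   zero is c = 0 (then all terms involving beta~ vanish). *)

definition F :: "nat \<Rightarrow> nat \<Rightarrow> real \<Rightarrow> real \<Rightarrow> nat \<Rightarrow> real" where
  "F q a c be n = mangoldt n * delta q a n - 1 / real (totient q)
      + c / real (totient q) * real n powr (be - 1)"

definition J :: "nat \<Rightarrow> nat \<Rightarrow> real \<Rightarrow> real \<Rightarrow> real \<Rightarrow> real \<Rightarrow> ennreal" where
  "J q a c be X h = (\<integral>\<^sup>+ x \<in> {0..}.
      ennreal ((\<bar>\<Sum>n \<in> {n. x < real n \<and> real n \<le> x + h}. F q a c be n * exp (- real n / X)\<bar>)\<^sup>2)
      \<partial>lborel)"

definition H :: "nat \<Rightarrow> nat \<Rightarrow> real \<Rightarrow> real \<Rightarrow> real \<Rightarrow> ennreal" where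
  "H q a c be y = (\<integral>\<^sup>+ t \<in> {0..y}.
      ennreal ((psi t q a - t / real (totient q) + c / real (totient q) * (t powr be / be))\<^sup>2)
      \<partial>lborel)"

definition K :: "nat \<Rightarrow> nat \<Rightarrow> real \<Rightarrow> real \<Rightarrow> real \<Rightarrow> real \<Rightarrow> ennreal" where
  "K q a c be y h = (\<integral>\<^sup>+ t \<in> {0..y}.
      ennreal ((psi (t + h) q a - psi t q a - h / real (totient q)
         + c / real (totient q) * (((t + h) powr be - t powr be) / be))\<^sup>2)
      \<partial>lborel)"

definition RHS :: "nat \<Rightarrow> nat \<Rightarrow> real \<Rightarrow> real \<Rightarrow> real \<Rightarrow> real \<Rightarrow> ennreal" where
  "RHS q a c be X h =
     ennreal (h\<^sup>2 / X\<^sup>2) *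
       (\<Sum>j. ennreal (1 / 2 ^ j) * (H q a c be (real (Suc j) * X)
                                   + ennreal (real (Suc j) * X / (real (totient q))\<^sup>2)))
   + (\<Sum>j. ennreal (1 / 2 ^ j) * (K q a c be (real (Suc j) * X) h
                                   + ennreal (real (Suc j) * X / (real (totient q))\<^sup>2)))"

end

theory Submission
  imports Defs
begin

text \<open>
  Write S(t) for the sum of F(n) over n <= t, and E(t) for the function squared in H.
  Comparing the sum of n^(beta - 1) with t^beta / beta through the concavity of t^beta gives
  |S - E| <= 3 / phi(q) once beta >= 1/2. Partial summation over the window x < n <= x + h
  against the weight exp(-n/X), whose decrements are at most exp(-n/X) / X, followed by
  Cauchy-Schwarz, bounds the squared inner sum of J by exp(-2x/X) (S(x+h) - S(x))^2 plus
  (h/X)^2 times weighted values of S^2. After integrating in x, the weight exp(-2t/X) is at most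
  2^(-j) on [jX, (j+1)X), and replacing S by E on [0, (j+1)X] costs O((j+1) X / phi(q)^2):
  this gives the K- and H-series. An exceptional zero only occurs for q >= 3, where
  beta > 1 - c0 / log q >= 1/2.
\<close>

section \<open>Sums of n powr (r - 1)\<close>

lemma powr_le_tangent:
  fixes x y r :: real
  assumes "0 < x" "0 \<le> y" "0 \<le> r" "r \<le> 1"
  shows "y powr r \<le> x powr r + r * x powr (r - 1) * (y - x)"
proof -
  have x_powr: "x powr r = x * x powr (r - 1)"
    using assms(1) by (simp add: powr_diff)
  have "y powr r \<le> x powr r * (r * (y / x) + (1 - r))"
  proof (cases "y = 0")
    case True
    then show ?thesis using assms by simp
  next
    case False
    then have "(y / x) powr r * 1 powr (1 - r) \<le> r * (y / x) + (1 - r) * 1"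
      using assms by (intro Youngs_inequality_0) auto
    then have "x powr r * (y / x) powr r \<le> x powr r * (r * (y / x) + (1 - r))"
      by (simp add: mult_left_mono)
    then show ?thesis using assms by (simp add: powr_divide)
  qed
  also have "\<dots> = x powr r + r * x powr (r - 1) * (y - x)"
    unfolding x_powr using assms(1) by (simp add: field_simps)
  finally show ?thesis .
qed

lemma sum_powr_le:
  fixes r :: real
  assumes "0 < r" "r \<le> 1"
  shows "(\<Sum>n\<in>{1..N}. real n powr (r - 1)) \<le> real N powr r / r"
proof (induction N)
  case (Suc N)
  have "real N powr r \<le> real (Suc N) powr r - r * real (Suc N) powr (r - 1)"
    using powr_le_tangent[of "real (Suc N)" "real N" r] assms by simp
  then have "real (Suc N) powr (r - 1) \<le> (real (Suc N) powr r - real N powr r) / r"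
    using assms by (simp add: field_simps)
  then show ?case using Suc by (simp add: diff_divide_distrib)
qed simp

lemma sum_powr_ge:
  fixes r :: real
  assumes "0 < r" "r \<le> 1"
  shows "(real (Suc N) powr r - 1) / r \<le> (\<Sum>n\<in>{1..N}. real n powr (r - 1))"
proof (induction N)
  case (Suc N)
  have "real (Suc (Suc N)) powr r \<le> real (Suc N) powr r + r * real (Suc N) powr (r - 1)"
    using powr_le_tangent[of "real (Suc N)" "real (Suc (Suc N))" r] assms by simp
  then have "(real (Suc (Suc N)) powr r - real (Suc N) powr r) / r \<le> real (Suc N) powr (r - 1)"
    using assms by (simp add: field_simps)
  then show ?case using Suc by (simp add: diff_divide_distrib)
qed simp

lemma sum_powr_floor_bounds:
  fixes r t :: real
  assumes "0 < r" "r \<le> 1" "0 \<le> t"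
  shows "(t powr r - 1) / r \<le> (\<Sum>n\<in>{1..nat \<lfloor>t\<rfloor>}. real n powr (r - 1))"
    and "(\<Sum>n\<in>{1..nat \<lfloor>t\<rfloor>}. real n powr (r - 1)) \<le> t powr r / r"
proof -
  have floor_bounds: "real (nat \<lfloor>t\<rfloor>) \<le> t" "t \<le> real (Suc (nat \<lfloor>t\<rfloor>))"
    using assms(3) by linarith+
  have "t powr r \<le> real (Suc (nat \<lfloor>t\<rfloor>)) powr r"
    using floor_bounds assms by (intro powr_mono2) auto
  then show "(t powr r - 1) / r \<le> (\<Sum>n\<in>{1..nat \<lfloor>t\<rfloor>}. real n powr (r - 1))"
    using sum_powr_ge[OF assms(1,2)] assms(1)
    by (meson diff_right_mono divide_right_mono less_imp_le order_trans)
  have "real (nat \<lfloor>t\<rfloor>) powr r \<le> t powr r"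
    using floor_bounds assms by (intro powr_mono2) auto
  then show "(\<Sum>n\<in>{1..nat \<lfloor>t\<rfloor>}. real n powr (r - 1)) \<le> t powr r / r"
    using sum_powr_le[OF assms(1,2)] assms(1) by (meson divide_right_mono less_imp_le order_trans)
qed

section \<open>The summatory function of F\<close>

definition summatory :: "(nat \<Rightarrow> real) \<Rightarrow> real \<Rightarrow> real" where
  "summatory f t = (\<Sum>n\<in>{1..nat \<lfloor>t\<rfloor>}. f n)"

lemma summatory_measurable [measurable]: "summatory f \<in> borel_measurable borel"
proof -
  have "(\<lambda>t::real. nat \<lfloor>t\<rfloor>) \<in> borel \<rightarrow>\<^sub>M count_space UNIV"
    by measurable
  then show ?thesis
    unfolding summatory_def[abs_def]
    by (rule measurable_compose) simp
qed

lemma psi_eq_summatory: "psi t q a = summatory (\<lambda>n. mangoldt n * delta q a n) t"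
proof -
  have "real m \<le> t \<longleftrightarrow> m \<le> nat \<lfloor>t\<rfloor>" if "1 \<le> m" for m
    using that le_floor_iff[of "int m" t] by linarith
  then have "{m. 1 \<le> m \<and> real m \<le> t \<and> [m = a] (mod q)} = {m \<in> {1..nat \<lfloor>t\<rfloor>}. [m = a] (mod q)}"
    by auto
  then have "psi t q a = sum mangoldt {m \<in> {1..nat \<lfloor>t\<rfloor>}. [m = a] (mod q)}"
    by (simp only: psi_def)
  also have "\<dots> = (\<Sum>n\<in>{1..nat \<lfloor>t\<rfloor>}. if [n = a] (mod q) then mangoldt n else 0)"
    by (rule sum.inter_filter) simp
  finally show ?thesis
    unfolding summatory_def delta_def by (simp add: if_distrib cong: if_cong)
qed

lemma psi_measurable [measurable]: "(\<lambda>t. psi t q a) \<in> borel_measurable borel"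
  unfolding psi_eq_summatory by measurable

definition psi_error :: "nat \<Rightarrow> nat \<Rightarrow> real \<Rightarrow> real \<Rightarrow> real \<Rightarrow> real" where
  "psi_error q a c be t =
     psi t q a - t / real (totient q) + c / real (totient q) * (t powr be / be)"

lemma psi_error_measurable [measurable]: "psi_error q a c be \<in> borel_measurable borel"
  unfolding psi_error_def[abs_def] by measurable

lemma summatory_F:
  "summatory (F q a c be) t = psi t q a - real (nat \<lfloor>t\<rfloor>) / real (totient q)
     + c / real (totient q) * (\<Sum>n\<in>{1..nat \<lfloor>t\<rfloor>}. real n powr (be - 1))"
  unfolding psi_eq_summatory summatory_def F_def
  by (simp add: sum.distrib sum_subtractf sum_distrib_left)

lemma summatory_F_approx:
  assumes "0 \<le> t" "1 \<le> q" "1 / 2 \<le> be" "be \<le> 1" "\<bar>c\<bar> \<le> 1"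
  shows "\<bar>summatory (F q a c be) t - psi_error q a c be t\<bar> \<le> 3 / real (totient q)"
proof -
  define p where "p = real (totient q)"
  define \<sigma> where "\<sigma> = (\<Sum>n\<in>{1..nat \<lfloor>t\<rfloor>}. real n powr (be - 1))"
  have p: "1 \<le> p"
    using assms(2) by (simp add: p_def Suc_le_eq totient_gt_0_iff)
  have "\<bar>\<sigma> - t powr be / be\<bar> \<le> 1 / be"
    using sum_powr_floor_bounds[of be t] assms by (auto simp: \<sigma>_def diff_divide_distrib)
  also have "\<dots> \<le> 2"
    using assms(3) by (simp add: field_simps)
  finally have powr_part: "\<bar>c / p * (\<sigma> - t powr be / be)\<bar> \<le> 2 / p"
    unfolding abs_mult using assms(5) p
    by (intro mult_mono[where b = "1 / p", simplified]) (auto simp: abs_divide divide_right_mono)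
  have "\<bar>t - real (nat \<lfloor>t\<rfloor>)\<bar> \<le> 1"
    using assms(1) by linarith
  then have floor_part: "\<bar>(t - real (nat \<lfloor>t\<rfloor>)) / p\<bar> \<le> 1 / p"
    using p by (simp add: abs_divide divide_right_mono)
  have "summatory (F q a c be) t - psi_error q a c be t
      = (t - real (nat \<lfloor>t\<rfloor>)) / p + c / p * (\<sigma> - t powr be / be)"
    unfolding summatory_F psi_error_def p_def[symmetric] \<sigma>_def[symmetric]
    using p by (simp add: field_simps)
  also have "\<bar>\<dots>\<bar> \<le> 1 / p + 2 / p"
    using abs_triangle_ineq floor_part powr_part by (rule order_trans[OF _ add_mono])
  finally show ?thesis
    by (simp add: p_def add_divide_distrib[symmetric])
qed

section \<open>Partial summation over a window\<close>

lemma sum_gtAtMost_by_parts: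
  fixes f w :: "nat \<Rightarrow> 'a::comm_ring"
  shows "(\<Sum>n\<in>{a<..b}. f n * w n) = w (Suc b) * (\<Sum>n\<in>{a<..b}. f n)
           + (\<Sum>m\<in>{a<..b}. (w m - w (Suc m)) * (\<Sum>n\<in>{a<..m}. f n))"
proof (induction b)
  case (Suc b)
  show ?case
  proof (cases "a \<le> b")
    case True
    then have "{a<..Suc b} = insert (Suc b) {a<..b}"
      by auto
    then show ?thesis
      using Suc.IH by (simp add: algebra_simps)
  qed simp
qed simp

lemma exp_decrement_bounds:
  fixes X t :: real
  assumes "0 < X"
  shows "0 \<le> exp (- t / X) - exp (- (t + 1) / X)"
    and "exp (- t / X) - exp (- (t + 1) / X) \<le> exp (- t / X) / X"
proof -
  have split: "exp (- (t + 1) / X) = exp (- t / X) * exp (- 1 / X)"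
    by (simp add: exp_add[symmetric] diff_divide_distrib)
  show "0 \<le> exp (- t / X) - exp (- (t + 1) / X)"
    using assms by (simp add: field_simps)
  have "1 - exp (- 1 / X) \<le> 1 / X"
    using exp_ge_add_one_self[of "- 1 / X"] by simp
  then have "exp (- t / X) * (1 - exp (- 1 / X)) \<le> exp (- t / X) * (1 / X)"
    by (rule mult_left_mono) simp
  then show "exp (- t / X) - exp (- (t + 1) / X) \<le> exp (- t / X) / X"
    unfolding split by (simp add: algebra_simps)
qed

lemma square_sum_le: "((p::real) + q)\<^sup>2 \<le> 2 * p\<^sup>2 + 2 * q\<^sup>2"
  using zero_le_power2[of "p - q"] by (simp add: power2_eq_square algebra_simps)

lemma sum_mult_diff_sq_le:
  fixes d W s :: "nat \<Rightarrow> real" and I :: "nat set"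
  assumes card: "real (card I) \<le> L"
    and d: "\<And>m. m \<in> I \<Longrightarrow> \<bar>d m\<bar> \<le> c * W m"
    and W: "\<And>m. m \<in> I \<Longrightarrow> (W m)\<^sup>2 \<le> w\<^sup>2"
  shows "(\<Sum>m\<in>I. d m * (s m - \<sigma>))\<^sup>2
     \<le> 2 * L * c\<^sup>2 * (\<Sum>m\<in>I. (W m)\<^sup>2 * (s m)\<^sup>2) + 2 * L\<^sup>2 * c\<^sup>2 * w\<^sup>2 * \<sigma>\<^sup>2"
proof -
  have "(\<Sum>m\<in>I. (d m * (s m - \<sigma>))\<^sup>2)
      \<le> (\<Sum>m\<in>I. 2 * c\<^sup>2 * ((W m)\<^sup>2 * (s m)\<^sup>2) + 2 * c\<^sup>2 * w\<^sup>2 * \<sigma>\<^sup>2)"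
  proof (rule sum_mono)
    fix m assume m: "m \<in> I"
    have "(d m)\<^sup>2 \<le> (c * W m)\<^sup>2"
      using d[OF m] by (metis abs_le_square_iff abs_of_nonneg abs_ge_zero order_trans)
    moreover have "(s m - \<sigma>)\<^sup>2 \<le> 2 * (s m)\<^sup>2 + 2 * \<sigma>\<^sup>2"
      using square_sum_le[of "s m" "- \<sigma>"] by simp
    ultimately have "(d m * (s m - \<sigma>))\<^sup>2 \<le> (c * W m)\<^sup>2 * (2 * (s m)\<^sup>2 + 2 * \<sigma>\<^sup>2)"
      unfolding power_mult_distrib[of "d m"] by (intro mult_mono) auto
    also have "\<dots> = 2 * c\<^sup>2 * ((W m)\<^sup>2 * (s m)\<^sup>2) + 2 * c\<^sup>2 * \<sigma>\<^sup>2 * (W m)\<^sup>2"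
      by (simp add: power_mult_distrib algebra_simps)
    also have "\<dots> \<le> 2 * c\<^sup>2 * ((W m)\<^sup>2 * (s m)\<^sup>2) + 2 * c\<^sup>2 * \<sigma>\<^sup>2 * w\<^sup>2"
      using W[OF m] by (intro add_left_mono mult_left_mono) auto
    finally show "(d m * (s m - \<sigma>))\<^sup>2 \<le> 2 * c\<^sup>2 * ((W m)\<^sup>2 * (s m)\<^sup>2) + 2 * c\<^sup>2 * w\<^sup>2 * \<sigma>\<^sup>2"
      by (simp add: mult_ac)
  qed
  also have "\<dots> \<le> 2 * c\<^sup>2 * (\<Sum>m\<in>I. (W m)\<^sup>2 * (s m)\<^sup>2) + L * (2 * c\<^sup>2 * w\<^sup>2 * \<sigma>\<^sup>2)"
    using card by (simp add: sum.distrib sum_distrib_left mult_right_mono)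
  finally have squares: "(\<Sum>m\<in>I. (d m * (s m - \<sigma>))\<^sup>2) \<le> \<dots>" .
  have "0 \<le> L"
    using card of_nat_0_le_iff order_trans by blast
  then have "(\<Sum>m\<in>I. d m * (s m - \<sigma>))\<^sup>2 \<le> (\<Sum>m\<in>I. (d m * (s m - \<sigma>))\<^sup>2) * L"
    using sum_squared_le_sum_of_squares[of "\<lambda>m. d m * (s m - \<sigma>)" I] card
    by (meson mult_left_mono order_trans sum_nonneg zero_le_power2)
  also have "\<dots> \<le> (2 * c\<^sup>2 * (\<Sum>m\<in>I. (W m)\<^sup>2 * (s m)\<^sup>2) + L * (2 * c\<^sup>2 * w\<^sup>2 * \<sigma>\<^sup>2)) * L"
    using squares \<open>0 \<le> L\<close> by (rule mult_right_mono)
  finally show ?thesis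
    by (simp add: algebra_simps power2_eq_square)
qed

lemma window_eq_greaterThanAtMost:
  assumes "0 \<le> x" "0 \<le> h"
  shows "{n. x < real n \<and> real n \<le> x + h} = {nat \<lfloor>x\<rfloor><..nat \<lfloor>x + h\<rfloor>}"
  using assms by (auto simp: less_floor_iff le_nat_iff nat_less_iff) linarith+

lemma sum_gtAtMost_eq_diff:
  fixes f :: "nat \<Rightarrow> 'a::ab_group_add"
  assumes "a \<le> m"
  shows "(\<Sum>n\<in>{a<..m}. f n) = (\<Sum>n\<in>{1..m}. f n) - (\<Sum>n\<in>{1..a}. f n)"
proof -
  have "{1..m} = {1..a} \<union> {a<..m}" "{1..a} \<inter> {a<..m} = {}"
    using assms by auto
  then show ?thesis
    by (simp add: sum.union_disjoint)
qed

lemma window_sum_sq_le: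
  fixes f :: "nat \<Rightarrow> real" and X h x :: real
  assumes X: "0 < X" and h: "1 \<le> h" and x: "0 \<le> x"
  shows "(\<Sum>n\<in>{n. x < real n \<and> real n \<le> x + h}. f n * exp (- real n / X))\<^sup>2
     \<le> 2 * (exp (- x / X))\<^sup>2 * (summatory f (x + h) - summatory f x)\<^sup>2
       + 16 * (h / X)\<^sup>2 * (exp (- x / X))\<^sup>2 * (summatory f x)\<^sup>2
       + 8 * h / X\<^sup>2 * (\<Sum>m\<in>{n. x < real n \<and> real n \<le> x + h}.
                          (exp (- real m / X))\<^sup>2 * (summatory f m)\<^sup>2)"
proof -
  define W where "W t = exp (- t / X)" for t
  define a where "a = nat \<lfloor>x\<rfloor>"
  define b where "b = nat \<lfloor>x + h\<rfloor>"
  define s where "s m = (\<Sum>n\<in>{1..m}. f n)" for m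
  define d where "d m = W (real m) - W (real m + 1)" for m
  have a: "real a \<le> x" "x < real a + 1" and b: "real b \<le> x + h" "x + h < real b + 1"
    using x h by (simp_all add: a_def b_def)
  have window: "{n. x < real n \<and> real n \<le> x + h} = {a<..b}"
    using window_eq_greaterThanAtMost[of x h] x h by (simp add: a_def b_def)
  have W_anti: "W t \<le> W u" if "u \<le> t" for t u
    using that X by (simp add: W_def divide_right_mono)
  have W_window: "(W m)\<^sup>2 \<le> (W x)\<^sup>2" if "m \<in> {a<..b}" for m
    using that a W_anti[of x m] by (intro power_mono) (auto simp: W_def)
  have card: "real (card {a<..b}) \<le> 2 * h"
    using a b h by simp
  have parts: "(\<Sum>n\<in>{a<..b}. f n * W n) = W (Suc b) * (s b - s a) + (\<Sum>m\<in>{a<..b}. d m * (s m - s a))"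
    using sum_gtAtMost_by_parts[of f "\<lambda>n. W (real n)" a b] sum_gtAtMost_eq_diff[of a _ f] a b h
    by (simp add: d_def s_def add.commute)
  have boundary: "(W (Suc b) * (s b - s a))\<^sup>2 \<le> (W x)\<^sup>2 * (s b - s a)\<^sup>2"
    using b h W_anti[of x "real (Suc b)"]
    by (auto simp: power_mult_distrib W_def intro!: mult_right_mono power_mono)
  have "(\<Sum>m\<in>{a<..b}. d m * (s m - s a))\<^sup>2
      \<le> 2 * (2 * h) * (1 / X)\<^sup>2 * (\<Sum>m\<in>{a<..b}. (W m)\<^sup>2 * (s m)\<^sup>2)
        + 2 * (2 * h)\<^sup>2 * (1 / X)\<^sup>2 * (W x)\<^sup>2 * (s a)\<^sup>2"
    using card W_window X exp_decrement_bounds[OF X]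
    by (intro sum_mult_diff_sq_le) (auto simp: d_def W_def)
  moreover have "summatory f x = s a" "summatory f (x + h) = s b" "\<And>m. summatory f (real m) = s m"
    by (simp_all add: summatory_def s_def a_def b_def)
  ultimately show ?thesis
    using square_sum_le[of "W (Suc b) * (s b - s a)" "\<Sum>m\<in>{a<..b}. d m * (s m - s a)"] boundary
    unfolding window parts[unfolded W_def]
    by (simp add: W_def power_divide power_mult_distrib)
qed

section \<open>Integrals over the half-line\<close>

lemma window_sum_eq_suminf_indicator:
  fixes g :: "nat \<Rightarrow> ennreal"
  shows "(\<Sum>m\<in>{n. x < real n \<and> real n \<le> x + h}. g m)
       = (\<Sum>m. g m * indicator {real m - h..<real m} x)"
proof -
  have "finite {n. x < real n \<and> real n \<le> x + h}"
    by (rule finite_subset[of _ "{..nat \<lfloor>x + h\<rfloor>}"]) (auto simp: le_nat_floor)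
  then show ?thesis
    by (subst suminf_finite[where N = "{n. x < real n \<and> real n \<le> x + h}"])
       (auto simp: indicator_def intro!: sum.cong)
qed

lemma window_sum_measurable [measurable]:
  fixes g :: "nat \<Rightarrow> ennreal"
  shows "(\<lambda>x. \<Sum>m\<in>{n. x < real n \<and> real n \<le> x + h}. g m) \<in> borel_measurable borel"
  unfolding window_sum_eq_suminf_indicator by measurable

lemma nn_integral_window_sum:
  fixes g :: "nat \<Rightarrow> ennreal"
  assumes "0 \<le> h"
  shows "(\<integral>\<^sup>+x. (\<Sum>m\<in>{n. x < real n \<and> real n \<le> x + h}. g m) \<partial>lborel) = ennreal h * (\<Sum>m. g m)"
proof -
  have "(\<integral>\<^sup>+x. (\<Sum>m\<in>{n. x < real n \<and> real n \<le> x + h}. g m) \<partial>lborel)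
      = (\<Sum>m. \<integral>\<^sup>+x. g m * indicator {real m - h..<real m} x \<partial>lborel)"
    unfolding window_sum_eq_suminf_indicator by (rule nn_integral_suminf) measurable
  also have "\<dots> = (\<Sum>m. g m * ennreal h)"
    using assms by (simp add: nn_integral_cmult_indicator)
  finally show ?thesis
    by (simp add: mult.commute)
qed

lemma suminf_indicator_unit_intervals:
  "(\<Sum>m. indicator {real m..<real m + 1} t :: ennreal) = indicator {0..} t"
proof (cases "0 \<le> t")
  case True
  have "m = nat \<lfloor>t\<rfloor>" if "real m \<le> t" "t < real m + 1" for m
    using that floor_unique[of "int m" t] by simp
  then have "(\<Sum>m. indicator {real m..<real m + 1} t :: ennreal)
      = (\<Sum>m\<in>{nat \<lfloor>t\<rfloor>}. indicator {real m..<real m + 1} t)"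
    by (intro suminf_finite) (auto simp: indicator_def)
  then show ?thesis
    using True by (simp add: indicator_def)
qed (simp add: indicator_def)

lemma suminf_le_nn_integral:
  fixes u :: "nat \<Rightarrow> ennreal" and \<Phi> :: "real \<Rightarrow> ennreal"
  assumes [measurable]: "\<Phi> \<in> borel_measurable borel"
    and le: "\<And>m t. real m \<le> t \<Longrightarrow> t < real m + 1 \<Longrightarrow> u m \<le> \<Phi> t"
  shows "(\<Sum>m. u m) \<le> (\<integral>\<^sup>+t\<in>{0..}. \<Phi> t \<partial>lborel)"
proof -
  have "(\<Sum>m. u m) = (\<Sum>m. \<integral>\<^sup>+t. u m * indicator {real m..<real m + 1} t \<partial>lborel)"
    by (simp add: nn_integral_cmult_indicator)
  also have "\<dots> \<le> (\<Sum>m. \<integral>\<^sup>+t. \<Phi> t * indicator {real m..<real m + 1} t \<partial>lborel)"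
    by (intro suminf_le nn_integral_mono) (auto simp: indicator_def intro: le)
  also have "\<dots> = (\<integral>\<^sup>+t. \<Phi> t * (\<Sum>m. indicator {real m..<real m + 1} t) \<partial>lborel)"
    by (subst nn_integral_suminf[symmetric]) auto
  finally show ?thesis
    by (simp only: suminf_indicator_unit_intervals)
qed

lemma exp_sq_le_inverse_power2:
  fixes t X :: real
  assumes "0 < X" "real j \<le> t / X"
  shows "(exp (- t / X))\<^sup>2 \<le> 1 / 2 ^ j"
proof -
  have "(2::real) ^ j \<le> exp 1 ^ j"
    using exp_ge_add_one_self[of 1] by (intro power_mono) auto
  also have "\<dots> = exp (real j)"
    by (simp add: exp_of_nat_mult[symmetric])
  also have "\<dots> \<le> exp (2 * (t / X))"
    using assms(2) of_nat_0_le_iff[of j] by simp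
  finally have "2 ^ j * exp (- (2 * t / X)) \<le> 1"
    by (simp add: exp_minus field_simps)
  then show ?thesis
    by (simp add: power2_eq_square exp_add[symmetric] field_simps)
qed

lemma exp_shift_sq_le:
  fixes X t :: real
  assumes "2 \<le> X" "s \<le> t" "t < s + 1"
  shows "(exp (- s / X))\<^sup>2 \<le> 3 * (exp (- t / X))\<^sup>2"
proof -
  have "2 * (- s / X) \<le> 2 * (- t / X) + 1"
    using assms by (simp add: field_simps)
  then have "exp (2 * (- s / X)) \<le> exp (2 * (- t / X)) * exp 1"
    by (simp add: exp_add[symmetric])
  also have "\<dots> \<le> exp (2 * (- t / X)) * 3"
    using exp_le by (intro mult_left_mono) auto
  finally show ?thesis
    by (simp add: power2_eq_square exp_add[symmetric] mult.commute)
qed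

lemma nn_integral_exp_weight_le:
  fixes g :: "real \<Rightarrow> ennreal"
  assumes [measurable]: "g \<in> borel_measurable borel" and X: "0 < X"
  shows "(\<integral>\<^sup>+t\<in>{0..}. ennreal ((exp (- t / X))\<^sup>2) * g t \<partial>lborel)
     \<le> (\<Sum>j. ennreal (1 / 2 ^ j) * (\<integral>\<^sup>+t\<in>{0..real (Suc j) * X}. g t \<partial>lborel))"
proof -
  have "ennreal ((exp (- t / X))\<^sup>2) * g t * indicator {0..} t
      \<le> (\<Sum>j. ennreal (1 / 2 ^ j) * (g t * indicator {0..real (Suc j) * X} t))" for t
  proof (cases "0 \<le> t")
    case True
    define j where "j = nat \<lfloor>t / X\<rfloor>"
    have "real j \<le> t / X" "t / X < real j + 1"
      using True X by (simp_all add: j_def)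
    then have j: "real j \<le> t / X" "t \<le> real (Suc j) * X"
      using X by (simp_all add: field_simps)
    have "ennreal ((exp (- t / X))\<^sup>2) * g t * indicator {0..} t \<le> ennreal (1 / 2 ^ j) * g t"
      using exp_sq_le_inverse_power2[OF X j(1)] True by (auto intro!: mult_right_mono ennreal_leI)
    also have "\<dots> = ennreal (1 / 2 ^ j) * (g t * indicator {0..real (Suc j) * X} t)"
      using True j by simp
    also have "\<dots> \<le> (\<Sum>j. ennreal (1 / 2 ^ j) * (g t * indicator {0..real (Suc j) * X} t))"
      using sum_le_suminf[of "\<lambda>j. ennreal (1 / 2 ^ j) * (g t * indicator {0..real (Suc j) * X} t)" "{j}"]
      by simp
    finally show ?thesis .
  qed simp
  then have "(\<integral>\<^sup>+t\<in>{0..}. ennreal ((exp (- t / X))\<^sup>2) * g t \<partial>lborel)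
      \<le> (\<integral>\<^sup>+t. (\<Sum>j. ennreal (1 / 2 ^ j) * (g t * indicator {0..real (Suc j) * X} t)) \<partial>lborel)"
    by (intro nn_integral_mono) (simp add: mult.assoc)
  also have "\<dots> = (\<Sum>j. ennreal (1 / 2 ^ j) * (\<integral>\<^sup>+t\<in>{0..real (Suc j) * X}. g t \<partial>lborel))"
    by (subst nn_integral_suminf) (auto simp: nn_integral_cmult)
  finally show ?thesis .
qed

lemma nn_integral_sq_le_of_close:
  fixes P E :: "real \<Rightarrow> real"
  assumes [measurable]: "P \<in> borel_measurable borel" "E \<in> borel_measurable borel"
    and "0 \<le> Y" "0 < d" "1 \<le> M"
    and close: "\<And>t. 0 \<le> t \<Longrightarrow> t \<le> Y \<Longrightarrow> (P t - E t)\<^sup>2 \<le> M / d"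
  shows "(\<integral>\<^sup>+t\<in>{0..Y}. ennreal ((P t)\<^sup>2) \<partial>lborel)
     \<le> ennreal (2 * M) * ((\<integral>\<^sup>+t\<in>{0..Y}. ennreal ((E t)\<^sup>2) \<partial>lborel) + ennreal (Y / d))"
proof -
  have "ennreal ((P t)\<^sup>2) * indicator {0..Y} t
      \<le> ennreal (2 * M) * (ennreal ((E t)\<^sup>2) * indicator {0..Y} t + ennreal (1 / d) * indicator {0..Y} t)"
    for t
  proof (cases "0 \<le> t \<and> t \<le> Y")
    case True
    have "(P t)\<^sup>2 \<le> 2 * (E t)\<^sup>2 + 2 * (P t - E t)\<^sup>2"
      using square_sum_le[of "E t" "P t - E t"] by simp
    also have "\<dots> \<le> 2 * (M * (E t)\<^sup>2) + 2 * (M / d)"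
      using close[of t] True assms(5) mult_right_mono[of 1 M "(E t)\<^sup>2"] by simp
    also have "\<dots> = 2 * M * ((E t)\<^sup>2 + 1 / d)"
      by (simp add: algebra_simps)
    finally have "ennreal ((P t)\<^sup>2) \<le> ennreal (2 * M * ((E t)\<^sup>2 + 1 / d))"
      by (rule ennreal_leI)
    also have "\<dots> = ennreal (2 * M) * (ennreal ((E t)\<^sup>2) + ennreal (1 / d))"
      using assms(4,5) by (simp add: ennreal_mult ennreal_plus[symmetric] del: ennreal_plus)
    finally show ?thesis
      using True by simp
  qed simp
  then have "(\<integral>\<^sup>+t\<in>{0..Y}. ennreal ((P t)\<^sup>2) \<partial>lborel)
      \<le> (\<integral>\<^sup>+t. ennreal (2 * M) * (ennreal ((E t)\<^sup>2) * indicator {0..Y} t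
                                  + ennreal (1 / d) * indicator {0..Y} t) \<partial>lborel)"
    by (rule nn_integral_mono)
  also have "\<dots> = ennreal (2 * M) * ((\<integral>\<^sup>+t\<in>{0..Y}. ennreal ((E t)\<^sup>2) \<partial>lborel) + ennreal (1 / d) * ennreal Y)"
    using assms(3) by (simp add: nn_integral_cmult nn_integral_add nn_integral_cmult_indicator)
  finally show ?thesis
    using assms(3,4) by (simp add: ennreal_mult[symmetric])
qed

lemma nn_integral_exp_weight_sq_le:
  fixes P E :: "real \<Rightarrow> real"
  assumes [measurable]: "P \<in> borel_measurable borel" "E \<in> borel_measurable borel"
    and "0 < X" "0 < d" "1 \<le> M"
    and close: "\<And>t. 0 \<le> t \<Longrightarrow> (P t - E t)\<^sup>2 \<le> M / d"
  shows "(\<integral>\<^sup>+t\<in>{0..}. ennreal ((exp (- t / X))\<^sup>2 * (P t)\<^sup>2) \<partial>lborel)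
     \<le> ennreal (2 * M) * (\<Sum>j. ennreal (1 / 2 ^ j) *
          ((\<integral>\<^sup>+t\<in>{0..real (Suc j) * X}. ennreal ((E t)\<^sup>2) \<partial>lborel) + ennreal (real (Suc j) * X / d)))"
proof -
  have "(\<integral>\<^sup>+t\<in>{0..}. ennreal ((exp (- t / X))\<^sup>2 * (P t)\<^sup>2) \<partial>lborel)
      \<le> (\<Sum>j. ennreal (1 / 2 ^ j) * (\<integral>\<^sup>+t\<in>{0..real (Suc j) * X}. ennreal ((P t)\<^sup>2) \<partial>lborel))"
    using nn_integral_exp_weight_le[of "\<lambda>t. ennreal ((P t)\<^sup>2)" X] assms(3)
    by (simp add: ennreal_mult)
  also have "\<dots> \<le> (\<Sum>j. ennreal (1 / 2 ^ j) * (ennreal (2 * M) *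
          ((\<integral>\<^sup>+t\<in>{0..real (Suc j) * X}. ennreal ((E t)\<^sup>2) \<partial>lborel) + ennreal (real (Suc j) * X / d))))"
    using assms(3-5) close
    by (intro suminf_le mult_left_mono nn_integral_sq_le_of_close) auto
  finally show ?thesis
    by (simp only: mult.left_commute[of _ "ennreal (2 * M)"] ennreal_suminf_cmult)
qed

lemma suminf_exp_weight_summatory_le:
  fixes f :: "nat \<Rightarrow> real"
  assumes X: "2 \<le> X"
  shows "(\<Sum>m. ennreal ((exp (- real m / X))\<^sup>2 * (summatory f m)\<^sup>2))
     \<le> 3 * (\<integral>\<^sup>+x\<in>{0..}. ennreal ((exp (- x / X))\<^sup>2 * (summatory f x)\<^sup>2) \<partial>lborel)"
proof -
  define B where "B x = (exp (- x / X))\<^sup>2 * (summatory f x)\<^sup>2" for x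
  have "ennreal (B m) \<le> 3 * ennreal (B t)" if "real m \<le> t" "t < real m + 1" for m t
  proof -
    have "summatory f (real m) = summatory f t"
      using that floor_unique[of "int m" t] by (simp add: summatory_def)
    then have "B m \<le> 3 * B t"
      using mult_right_mono[OF exp_shift_sq_le[OF X that] zero_le_power2[of "summatory f t"]]
      by (simp add: B_def mult.assoc)
    then have "ennreal (B m) \<le> ennreal (3 * B t)"
      by (rule ennreal_leI)
    then show ?thesis
      by (simp add: ennreal_mult')
  qed
  then have "(\<Sum>m. ennreal (B m)) \<le> (\<integral>\<^sup>+t\<in>{0..}. 3 * ennreal (B t) \<partial>lborel)"
    by (intro suminf_le_nn_integral) (auto simp: B_def)
  then show ?thesis
    by (simp add: B_def nn_integral_cmult mult.assoc)
qed

lemma window_sum_sq_indicator_le: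
  fixes f :: "nat \<Rightarrow> real"
  assumes X: "0 < X" and h: "1 \<le> h"
  defines "B \<equiv> \<lambda>x. (exp (- x / X))\<^sup>2 * (summatory f x)\<^sup>2"
  shows "ennreal ((\<Sum>n\<in>{n. x < real n \<and> real n \<le> x + h}. f n * exp (- real n / X))\<^sup>2) * indicator {0..} x
     \<le> 2 * (ennreal ((exp (- x / X))\<^sup>2 * (summatory f (x + h) - summatory f x)\<^sup>2) * indicator {0..} x)
       + ennreal (16 * (h / X)\<^sup>2) * (ennreal (B x) * indicator {0..} x)
       + ennreal (8 * h / X\<^sup>2) * (\<Sum>m\<in>{n. x < real n \<and> real n \<le> x + h}. ennreal (B m))"
proof (cases "0 \<le> x")
  case True
  have ennreal_split:
    "ennreal (2 * a + u * b + v * c) = 2 * ennreal a + ennreal u * ennreal b + ennreal v * ennreal c"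
    if "0 \<le> a" "0 \<le> b" "0 \<le> c" "0 \<le> u" "0 \<le> v" for a b c u v :: real
    using that by (simp add: ennreal_mult)
  have B_nonneg: "0 \<le> B x" for x
    by (simp add: B_def)
  have "ennreal ((\<Sum>n\<in>{n. x < real n \<and> real n \<le> x + h}. f n * exp (- real n / X))\<^sup>2)
      \<le> ennreal (2 * ((exp (- x / X))\<^sup>2 * (summatory f (x + h) - summatory f x)\<^sup>2)
                 + 16 * (h / X)\<^sup>2 * B x + 8 * h / X\<^sup>2 * (\<Sum>m\<in>{n. x < real n \<and> real n \<le> x + h}. B m))"
    using window_sum_sq_le[of X h x f] X h True by (intro ennreal_leI) (simp add: B_def mult.assoc)
  also have "\<dots> = 2 * ennreal ((exp (- x / X))\<^sup>2 * (summatory f (x + h) - summatory f x)\<^sup>2)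
      + ennreal (16 * (h / X)\<^sup>2) * ennreal (B x)
      + ennreal (8 * h / X\<^sup>2) * ennreal (\<Sum>m\<in>{n. x < real n \<and> real n \<le> x + h}. B m)"
    using h B_nonneg by (intro ennreal_split) (auto simp: sum_nonneg)
  finally show ?thesis
    using True B_nonneg by simp
qed simp

lemma nn_integral_window_sum_sq_le:
  fixes f :: "nat \<Rightarrow> real"
  assumes X: "2 \<le> X" and h: "1 \<le> h"
  shows "(\<integral>\<^sup>+x\<in>{0..}. ennreal ((\<Sum>n\<in>{n. x < real n \<and> real n \<le> x + h}. f n * exp (- real n / X))\<^sup>2) \<partial>lborel)
     \<le> 2 * (\<integral>\<^sup>+x\<in>{0..}. ennreal ((exp (- x / X))\<^sup>2 * (summatory f (x + h) - summatory f x)\<^sup>2) \<partial>lborel)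
       + ennreal (40 * (h / X)\<^sup>2) * (\<integral>\<^sup>+x\<in>{0..}. ennreal ((exp (- x / X))\<^sup>2 * (summatory f x)\<^sup>2) \<partial>lborel)"
    (is "?J \<le> 2 * ?I1 + ennreal (40 * (h / X)\<^sup>2) * ?I2")
proof -
  define A where "A x = (exp (- x / X))\<^sup>2 * (summatory f (x + h) - summatory f x)\<^sup>2" for x
  define B where "B x = (exp (- x / X))\<^sup>2 * (summatory f x)\<^sup>2" for x
  have "?J \<le> (\<integral>\<^sup>+x. 2 * (ennreal (A x) * indicator {0..} x)
      + ennreal (16 * (h / X)\<^sup>2) * (ennreal (B x) * indicator {0..} x)
      + ennreal (8 * h / X\<^sup>2) * (\<Sum>m\<in>{n. x < real n \<and> real n \<le> x + h}. ennreal (B m)) \<partial>lborel)"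
    using window_sum_sq_indicator_le[of X h f] X h
    by (intro nn_integral_mono) (simp add: A_def B_def)
  also have "\<dots> = 2 * ?I1 + ennreal (16 * (h / X)\<^sup>2) * ?I2
      + ennreal (8 * h / X\<^sup>2) * (ennreal h * (\<Sum>m. ennreal (B m)))"
    using h
    by (simp add: nn_integral_add nn_integral_cmult nn_integral_window_sum A_def B_def del: sum_ennreal)
  also have "\<dots> \<le> 2 * ?I1 + ennreal (16 * (h / X)\<^sup>2) * ?I2
      + ennreal (8 * h / X\<^sup>2) * (ennreal h * (3 * ?I2))"
    using suminf_exp_weight_summatory_le[OF X, of f]
    by (intro add_left_mono mult_left_mono) (auto simp: B_def)
  also have "ennreal (8 * h / X\<^sup>2) * (ennreal h * (3 * ?I2)) = ennreal (8 * h / X\<^sup>2 * (h * 3)) * ?I2"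
  proof -
    have "ennreal (8 * h / X\<^sup>2 * (h * 3)) = ennreal (8 * h / X\<^sup>2) * ennreal (h * 3)"
      by (rule ennreal_mult) (use h in auto)
    moreover have "ennreal (h * 3) = ennreal h * 3"
      by (subst ennreal_mult'') auto
    ultimately show ?thesis
      by (simp only: mult_ac)
  qed
  also have "8 * h / X\<^sup>2 * (h * 3) = 24 * (h / X)\<^sup>2"
    by (simp add: power_divide power2_eq_square)
  finally show ?thesis
    using X
    by (simp add: add.assoc distrib_right[symmetric] ennreal_plus[symmetric] del: ennreal_plus)
qed

lemma H_eq_nn_integral_psi_error:
  "H q a c be y = (\<integral>\<^sup>+t\<in>{0..y}. ennreal ((psi_error q a c be t)\<^sup>2) \<partial>lborel)"
  unfolding H_def psi_error_def ..

lemma K_eq_nn_integral_psi_error: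
  "K q a c be y h
     = (\<integral>\<^sup>+t\<in>{0..y}. ennreal ((psi_error q a c be (t + h) - psi_error q a c be t)\<^sup>2) \<partial>lborel)"
proof -
  have "psi (t + h) q a - psi t q a - h / real (totient q)
          + c / real (totient q) * (((t + h) powr be - t powr be) / be)
        = psi_error q a c be (t + h) - psi_error q a c be t" for t
    unfolding psi_error_def by (simp add: add_divide_distrib diff_divide_distrib algebra_simps)
  then show ?thesis
    unfolding K_def by simp
qed

lemma nn_integral_exp_weight_summatory_F_le:
  fixes a :: nat
  assumes q: "1 \<le> q" and X: "0 < X" and h: "0 \<le> h"
    and be: "1 / 2 \<le> be" "be \<le> 1" and c: "\<bar>c\<bar> \<le> 1"
  defines "S \<equiv> summatory (F q a c be)" and "p \<equiv> real (totient q)"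
  shows "(\<integral>\<^sup>+x\<in>{0..}. ennreal ((exp (- x / X))\<^sup>2 * (S x)\<^sup>2) \<partial>lborel)
           \<le> ennreal 18 * (\<Sum>j. ennreal (1 / 2 ^ j) *
                (H q a c be (real (Suc j) * X) + ennreal (real (Suc j) * X / p\<^sup>2)))"
      (is "?I2 \<le> ?H_series")
    and "(\<integral>\<^sup>+x\<in>{0..}. ennreal ((exp (- x / X))\<^sup>2 * (S (x + h) - S x)\<^sup>2) \<partial>lborel)
           \<le> ennreal 72 * (\<Sum>j. ennreal (1 / 2 ^ j) *
                (K q a c be (real (Suc j) * X) h + ennreal (real (Suc j) * X / p\<^sup>2)))"
      (is "?I1 \<le> ?K_series")
proof -
  define E where "E = psi_error q a c be"
  have p: "0 < p"
    using q by (simp add: p_def)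
  have close: "\<bar>S t - E t\<bar> \<le> 3 / p" if "0 \<le> t" for t
    unfolding S_def E_def p_def using summatory_F_approx that q be c by simp
  have "(S t - E t)\<^sup>2 \<le> 9 / p\<^sup>2" if "0 \<le> t" for t
    using power_mono[OF close[OF that] abs_ge_zero, of 2] by (simp add: power_divide)
  then show "?I2 \<le> ?H_series"
    using nn_integral_exp_weight_sq_le[of S E X "p\<^sup>2" 9] X p
    by (simp add: S_def E_def H_eq_nn_integral_psi_error)
  have close_diff: "\<bar>(S (t + h) - S t) - (E (t + h) - E t)\<bar> \<le> 6 / p" if "0 \<le> t" for t
    using close[of t] close[of "t + h"] that h by (simp add: abs_le_iff)
  have "((S (t + h) - S t) - (E (t + h) - E t))\<^sup>2 \<le> 36 / p\<^sup>2" if "0 \<le> t" for t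
    using power_mono[OF close_diff[OF that] abs_ge_zero, of 2] by (simp add: power_divide)
  then show "?I1 \<le> ?K_series"
    using nn_integral_exp_weight_sq_le[of "\<lambda>t. S (t + h) - S t" "\<lambda>t. E (t + h) - E t" X "p\<^sup>2" 36] X p
    by (simp add: S_def E_def K_eq_nn_integral_psi_error)
qed

lemma J_le_RHS:
  assumes q: "1 \<le> q" and X: "2 \<le> X" and h: "1 \<le> h"
    and be: "1 / 2 \<le> be" "be \<le> 1" and c: "\<bar>c\<bar> \<le> 1"
  shows "J q a c be X h \<le> ennreal 720 * RHS q a c be X h"
proof -
  define P where "P = (\<Sum>j. ennreal (1 / 2 ^ j) *
    (H q a c be (real (Suc j) * X) + ennreal (real (Suc j) * X / (real (totient q))\<^sup>2)))"
  define Q where "Q = (\<Sum>j. ennreal (1 / 2 ^ j) *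
    (K q a c be (real (Suc j) * X) h + ennreal (real (Suc j) * X / (real (totient q))\<^sup>2)))"
  have "J q a c be X h \<le> 2 * (\<integral>\<^sup>+x\<in>{0..}. ennreal ((exp (- x / X))\<^sup>2
        * (summatory (F q a c be) (x + h) - summatory (F q a c be) x)\<^sup>2) \<partial>lborel)
      + ennreal (40 * (h / X)\<^sup>2) * (\<integral>\<^sup>+x\<in>{0..}. ennreal ((exp (- x / X))\<^sup>2
        * (summatory (F q a c be) x)\<^sup>2) \<partial>lborel)"
    using nn_integral_window_sum_sq_le[OF X h, of "F q a c be"] by (simp add: J_def)
  also have "\<dots> \<le> 2 * (ennreal 72 * Q) + ennreal (40 * (h / X)\<^sup>2) * (ennreal 18 * P)"
    using nn_integral_exp_weight_summatory_F_le[OF q _ _ be c, of X h a] X h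
    unfolding P_def Q_def by (intro add_mono mult_left_mono) auto
  also have "\<dots> \<le> ennreal 720 * (ennreal (h\<^sup>2 / X\<^sup>2) * P + Q)"
  proof -
    have "ennreal (40 * (h / X)\<^sup>2) * ennreal 18 = ennreal 720 * ennreal (h\<^sup>2 / X\<^sup>2)"
      by (subst (1 2) ennreal_mult[symmetric]) (auto simp: power_divide)
    then have "ennreal (40 * (h / X)\<^sup>2) * (ennreal 18 * P) = ennreal 720 * (ennreal (h\<^sup>2 / X\<^sup>2) * P)"
      by (metis mult.assoc)
    moreover have "2 * (ennreal 72 * Q) \<le> ennreal 720 * Q"
      by (simp add: ennreal_mult'[symmetric] mult.assoc[symmetric] mult_right_mono)
    ultimately show ?thesis
      by (simp add: distrib_left add.commute add_left_mono)
  qed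
  finally show ?thesis
    by (simp add: RHS_def P_def Q_def)
qed

section \<open>Exceptional zeros\<close>

lemma real_dirichlet_char_mod:
  assumes "real_dirichlet_char q chi"
  shows "chi n = chi (n mod q)"
proof -
  have per: "chi (n + q) = chi n" for n
    using assms by (simp add: real_dirichlet_char_def)
  have "chi (m + k * q) = chi m" for m k
  proof (induction k)
    case (Suc k)
    have "m + Suc k * q = (m + k * q) + q"
      by simp
    then show ?case
      using Suc.IH per by metis
  qed simp
  then show ?thesis
    by (metis mod_div_mult_eq)
qed

lemma nonprincipal_real_dirichlet_char_modulus_ge_3:
  assumes chi: "real_dirichlet_char q chi" and "nonprincipal q chi"
  shows "3 \<le> q"
proof (rule ccontr)
  assume "\<not> 3 \<le> q"
  moreover have "1 \<le> q" "chi 1 = 1" "chi (0 + q) = chi 0"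
    using chi by (simp_all only: real_dirichlet_char_def)
  ultimately have "q = 1 \<or> q = 2"
    by linarith
  obtain n where n: "coprime n q" "chi n \<noteq> 1"
    using assms(2) by (auto simp: nonprincipal_def)
  have "chi (n mod q) = 1"
    using \<open>q = 1 \<or> q = 2\<close>
  proof
    assume "q = 1"
    then show ?thesis
      using \<open>chi 1 = 1\<close> \<open>chi (0 + q) = chi 0\<close> by simp
  next
    assume "q = 2"
    then show ?thesis
      using n(1) \<open>chi 1 = 1\<close> by (simp add: odd_iff_mod_2_eq_one)
  qed
  then show False
    using n(2) real_dirichlet_char_mod[OF chi, of n] by simp
qed

lemma exceptional_zero_ge_half:
  assumes "c0 \<le> 1 / 2" and "exceptional_zero c0 q chi \<beta>"
  shows "1 / 2 \<le> \<beta>"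
proof -
  have "3 \<le> q" and \<beta>: "1 - c0 / ln (real q) < \<beta>"
    using assms(2) nonprincipal_real_dirichlet_char_modulus_ge_3
    by (auto simp: exceptional_zero_def)
  then have "exp 1 \<le> real q"
    using exp_le by linarith
  then have "1 \<le> ln (real q)"
    using \<open>3 \<le> q\<close> by (subst ln_ge_iff) auto
  then have "c0 / ln (real q) \<le> 1 / 2"
    using assms(1) by (simp add: pos_divide_le_eq)
  then show ?thesis
    using \<beta> by linarith
qed

theorem lemma4p3:
  fixes c0 :: real
  assumes "0 < c0" and "c0 \<le> 1 / 2"
  shows "\<exists>C :: real. C > 0 \<and>
    (\<forall>(q::nat) (a::nat) (X::real) (h::real).
       q \<ge> 1 \<longrightarrow> coprime a q \<longrightarrow> X \<ge> 2 \<longrightarrow> 1 \<le> h \<longrightarrow> h \<le> X \<longrightarrow>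
       ((\<not> (\<exists>chi \<beta>. exceptional_zero c0 q chi \<beta>)) \<longrightarrow>
           J q a 0 1 X h \<le> ennreal C * RHS q a 0 1 X h) \<and>
       (\<forall>chi \<beta>. exceptional_zero c0 q chi \<beta> \<longrightarrow>
           J q a (real_of_int (chi a)) \<beta> X h \<le> ennreal C * RHS q a (real_of_int (chi a)) \<beta> X h))"
proof -
  have exceptional: "1 / 2 \<le> \<beta> \<and> \<beta> \<le> 1 \<and> \<bar>real_of_int (chi a)\<bar> \<le> 1"
    if "exceptional_zero c0 q chi \<beta>" for q chi \<beta> and a :: nat
  proof -
    have "chi a \<in> {-1, 0, 1}"
      using that by (simp add: exceptional_zero_def real_dirichlet_char_def)
    then show ?thesis
      using that exceptional_zero_ge_half[OF assms(2)] by (auto simp: exceptional_zero_def)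
  qed
  show ?thesis
    by (intro exI[of _ 720]) (auto intro!: J_le_RHS[simplified] dest: exceptional)
qed

end
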